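(* Let $\mathcal M$ be a finite polyptych lattice over $F$ and let $p\in \mathrm{Sp}(\mathcal M)$. Then $p$ is linear on every cone of $\Sigma(\mathcal M)$: for every $\mathcal C\in\Sigma(\mathcal M)$ and every $\alpha\in I$, the map $p\circ\pi_\alpha^{-1}$ restricted to $\pi_\alpha(\mathcal C)\cap M_\alpha$ is the restriction of an $F$-linear map $M_\alpha\to F$. Moreover, for every $F'$ with $F\subseteq F'\subseteq\mathbb R$, $p$ extends to a (continuous) function on $\mathcal M_{F'}$ which is $F'$-linear on each cone of $\Sigma(\mathcal M)$, and this extension lies in $\mathrm{Sp}_{F'}(\mathcal M)$.
   Context: Fix a subring $F$ with $\mathbb Z\subseteq F\subseteq\mathbb R$. A map $\psi:M\to M'$ between finite-rank free $F$-modules is piecewise $F$-linear if it is (the restriction of) a continuous map and there is a complete fan of $F$-rational polyhedral cones in $M\otimes_F\mathbb R$ such that $\psi|_{C\cap M}$ is $F$-linear for every cone $C$. A polyptych lattice of rank $r$ over $F$ is a collection $\{M_\alpha\}_{\alpha\in I}$ of free $F$-modules of rank $r$ with piecewise $F$-linear maps (mutations) $\mu_{\alpha,\beta}:M_\alpha\to M_\beta$ for all $\alpha,\beta\in I$ such that $\mu_{\alpha,\alpha}=\mathrm{id}$, $\mu_{\alpha,\beta}=\mu_{\beta,\alpha}^{-1}$ and $\mu_{\beta,\gamma}\circ\mu_{\alpha,\beta}=\mu_{\alpha,\gamma}$; it is finite if $I$ is finite. Its set of elements, also denoted $\mathcal M$, is $\bigsqcup_\alpha M_\alpha$ modulo $m_\alpha\sim\mu_{\alpha,\beta}(m_\alpha)$,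 and $\pi_\alpha:\mathcal M\to M_\alpha$ sends a class to its unique representative in $M_\alpha$. For $F\subseteq F'\subseteq \mathbb R$, $\mathcal M_{F'}$ is the polyptych lattice with charts $M_\alpha\otimes_FF'$ and the natural extensions of the mutations (in particular $\mathcal M_{\mathbb R}$). Write $m+_\alpha m':=\pi_\alpha^{-1}(\pi_\alpha(m)+\pi_\alpha(m'))$, and for $\lambda\in F_{\ge0}$, $\lambda m:=\pi_\alpha^{-1}(\lambda\pi_\alpha(m))$ (independent of $\alpha$). For finite $\mathcal M$, the PL fan $\Sigma(\mathcal M)$: fix $\alpha$, let $\Sigma(\mathcal M,\alpha)$ be the common refinement, over $\beta\in I$, of the minimal fans in $M_\alpha\otimes\mathbb R$ on whose cones $\mu_{\alpha,\beta}$ is linear; $\Sigma(\mathcal M)=\{\pi_\alpha^{-1}(C): C\in\Sigma(\mathcal M,\alpha)\}$ (independent of $\alpha$). A point of $\mathcal M$ is a function $p:\mathcal M\to F$ with $p(m)+p(m')=\min_{\alpha\in I}p(m+_\alpha m')$ for all $m,m'\in\mathcal M$ and $p(\lambda m)=\lambda p(m)$ for all $\lambda\in F_{\ge0}$; $\mathrm{Sp}(\mathcal M)$ is the set of points and $\mathrm{Sp}_{F'}(\mathcal M)$ the set of points of $\mathcal M_{F'}$. *)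

theory Defs
  imports "HOL-Analysis.Analysis"
begin

definition real_subring :: "real set \<Rightarrow> bool" where
  "real_subring F \<longleftrightarrow> \<int> \<subseteq> F \<and> (\<forall>x\<in>F. \<forall>y\<in>F. x + y \<in> F \<and> x * y \<in> F \<and> - x \<in> F)"

text \<open>The chart F^r, realised inside R^r (r = CARD('n)).\<close>
definition Fvec :: "real set \<Rightarrow> (real^'n) set" where
  "Fvec F = {x. \<forall>i. x $ i \<in> F}"

definition Frational_cone :: "real set \<Rightarrow> (real^'n) set \<Rightarrow> bool" where
  "Frational_cone F C \<longleftrightarrow> (\<exists>V. finite V \<and> V \<subseteq> Fvec F \<and>
      C = {x. \<exists>t. (\<forall>v\<in>V. t v \<ge> 0) \<and> x = (\<Sum>v\<in>V. t v *\<^sub>R v)})"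

definition Ffan :: "real set \<Rightarrow> (real^'n) set set \<Rightarrow> bool" where
  "Ffan F S \<longleftrightarrow> finite S \<and> (\<forall>C\<in>S. Frational_cone F C) \<and>
     (\<forall>C\<in>S. \<forall>G. G face_of C \<and> G \<noteq> {} \<longrightarrow> G \<in> S) \<and>
     (\<forall>C\<in>S. \<forall>D\<in>S. (C \<inter> D) face_of C \<and> (C \<inter> D) face_of D)"

definition complete_fan :: "real set \<Rightarrow> (real^'n) set set \<Rightarrow> bool" where
  "complete_fan F S \<longleftrightarrow> Ffan F S \<and> \<Union>S = UNIV"

definition linear_on_cone :: "real set \<Rightarrow> (real^'n \<Rightarrow> real^'n) \<Rightarrow> (real^'n) set \<Rightarrow> bool" where
  "linear_on_cone F f C \<longleftrightarrow> (\<exists>A. linear A \<and> (\<forall>x\<in>Fvec F. A x \<in> Fvec F) \<and> (\<forall>x\<in>C. f x = A x))"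

text \<open>Piecewise F-linear map (given through its natural extension to the real span).\<close>
definition pw_linear :: "real set \<Rightarrow> (real^'n \<Rightarrow> real^'n) \<Rightarrow> bool" where
  "pw_linear F f \<longleftrightarrow> continuous_on UNIV f \<and>
     (\<exists>S. complete_fan F S \<and> (\<forall>C\<in>S. linear_on_cone F f C))"

definition polyptych :: "real set \<Rightarrow> ('i::finite \<Rightarrow> 'i \<Rightarrow> real^'n \<Rightarrow> real^'n) \<Rightarrow> bool" where
  "polyptych F \<mu> \<longleftrightarrow> real_subring F \<and> (\<forall>a b. pw_linear F (\<mu> a b)) \<and>
     (\<forall>a. \<forall>x\<in>Fvec F. \<mu> a a x = x) \<and>
     (\<forall>a b. \<forall>x\<in>Fvec F. \<mu> b a (\<mu> a b x) = x) \<and>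
     (\<forall>a b c. \<forall>x\<in>Fvec F. \<mu> b c (\<mu> a b x) = \<mu> a c x)"

text \<open>Elements of M_K: a class is represented by its family of chart representatives
  (pi_a m = m a).\<close>
definition elems :: "real set \<Rightarrow> ('i::finite \<Rightarrow> 'i \<Rightarrow> real^'n \<Rightarrow> real^'n) \<Rightarrow> ('i \<Rightarrow> real^'n) set" where
  "elems K \<mu> = {m. (\<forall>a. m a \<in> Fvec K) \<and> (\<forall>a b. m b = \<mu> a b (m a))}"

definition pinv :: "('i::finite \<Rightarrow> 'i \<Rightarrow> real^'n \<Rightarrow> real^'n) \<Rightarrow> 'i \<Rightarrow> real^'n \<Rightarrow> ('i \<Rightarrow> real^'n)" where
  "pinv \<mu> a x = (\<lambda>b. \<mu> a b x)"

definition padd :: "('i::finite \<Rightarrow> 'i \<Rightarrow> real^'n \<Rightarrow> real^'n) \<Rightarrow> 'i \<Rightarrow> ('i \<Rightarrow> real^'n) \<Rightarrow> ('i \<Rightarrow> real^'n) \<Rightarrow> ('i \<Rightarrow> real^'n)" where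
  "padd \<mu> a m m' = pinv \<mu> a (m a + m' a)"

definition pscale :: "('i::finite \<Rightarrow> 'i \<Rightarrow> real^'n \<Rightarrow> real^'n) \<Rightarrow> 'i \<Rightarrow> real \<Rightarrow> ('i \<Rightarrow> real^'n) \<Rightarrow> ('i \<Rightarrow> real^'n)" where
  "pscale \<mu> a l m = pinv \<mu> a (l *\<^sub>R m a)"

text \<open>Points of M_K (K = F gives Sp(M), K = F' gives Sp_{F'}(M)).\<close>
definition Sp :: "real set \<Rightarrow> ('i::finite \<Rightarrow> 'i \<Rightarrow> real^'n \<Rightarrow> real^'n) \<Rightarrow> (('i \<Rightarrow> real^'n) \<Rightarrow> real) set" where
  "Sp K \<mu> = {p. (\<forall>m\<in>elems K \<mu>. p m \<in> K) \<and>
      (\<forall>m\<in>elems K \<mu>. \<forall>m'\<in>elems K \<mu>. p m + p m' = Min (range (\<lambda>a. p (padd \<mu> a m m')))) \<and>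
      (\<forall>l\<in>K. l \<ge> 0 \<longrightarrow> (\<forall>m\<in>elems K \<mu>. \<forall>a. p (pscale \<mu> a l m) = l * p m))}"

text \<open>K-linear functional K^r \<rightarrow> K (only its values on K^r matter).\<close>
definition Klinear_functional :: "real set \<Rightarrow> (real^'n \<Rightarrow> real) \<Rightarrow> bool" where
  "Klinear_functional K l \<longleftrightarrow> (\<forall>x\<in>Fvec K. l x \<in> K) \<and>
     (\<forall>x\<in>Fvec K. \<forall>y\<in>Fvec K. l (x + y) = l x + l y) \<and>
     (\<forall>c\<in>K. \<forall>x\<in>Fvec K. l (c *\<^sub>R x) = c * l x)"

definition refines :: "(real^'n) set set \<Rightarrow> (real^'n) set set \<Rightarrow> bool" where
  "refines S S' \<longleftrightarrow> (\<forall>C\<in>S. \<exists>D\<in>S'. C \<subseteq> D)"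

definition linearity_fan :: "real set \<Rightarrow> (real^'n \<Rightarrow> real^'n) \<Rightarrow> (real^'n) set set \<Rightarrow> bool" where
  "linearity_fan F f S \<longleftrightarrow> complete_fan F S \<and> (\<forall>C\<in>S. linear_on_cone F f C)"

definition minimal_fan :: "real set \<Rightarrow> (real^'n \<Rightarrow> real^'n) \<Rightarrow> (real^'n) set set \<Rightarrow> bool" where
  "minimal_fan F f S \<longleftrightarrow> linearity_fan F f S \<and>
     (\<forall>S'. linearity_fan F f S' \<and> refines S S' \<longrightarrow> S' = S)"

definition common_refinement :: "('i::finite \<Rightarrow> (real^'n) set set) \<Rightarrow> (real^'n) set set" where
  "common_refinement S = {(\<Inter>b. c b) | c. \<forall>b. c b \<in> S b}"

text \<open>Sigma(M, a0): cones in chart a0 (for any choice of the minimal fans).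
  The cone pi_a0^{-1}(C) of Sigma(M) is represented by the pair (a0, C).\<close>
definition Sigma_chart :: "real set \<Rightarrow> ('i::finite \<Rightarrow> 'i \<Rightarrow> real^'n \<Rightarrow> real^'n) \<Rightarrow> 'i \<Rightarrow> (real^'n) set set" where
  "Sigma_chart F \<mu> a0 = {C. \<exists>S. (\<forall>b. minimal_fan F (\<mu> a0 b) (S b)) \<and> C \<in> common_refinement S}"

definition linear_on_PLcone :: "real set \<Rightarrow> ('i::finite \<Rightarrow> 'i \<Rightarrow> real^'n \<Rightarrow> real^'n) \<Rightarrow> (('i \<Rightarrow> real^'n) \<Rightarrow> real) \<Rightarrow> 'i \<Rightarrow> (real^'n) set \<Rightarrow> bool" where
  "linear_on_PLcone K \<mu> q a0 C \<longleftrightarrow> (\<forall>a. \<exists>l. Klinear_functional K l \<and>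
      (\<forall>m\<in>elems K \<mu>. m a0 \<in> C \<longrightarrow> q m = l (m a)))"

end

theory Submission
  imports Defs
begin

text \<open>
  Read in a chart \<open>a\<close>, the point \<open>p\<close> becomes a function \<open>f\<^sub>a\<close> on \<open>F\<^sup>r\<close> that is superadditive
  (take \<open>a\<close> itself in the defining minimum) and additive on every chamber, i.e. every
  full-dimensional cone on which all mutations out of \<open>a\<close> are linear. Lattice points deep inside
  a chamber \<open>D\<close> turn additivity into linearity: \<open>f\<^sub>a\<close> agrees on \<open>D\<close> with an \<open>F\<close>-valued linear form
  \<open>l\<^sub>D\<close>, and superadditivity gives \<open>f\<^sub>a \<le> l\<^sub>D\<close> everywhere. So \<open>f\<^sub>a\<close> is the minimum of the finitely
  many \<open>l\<^sub>D\<close>, and this minimum is the continuous extension of \<open>p\<close>; the identities defining a point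
  pass to it from the dense set of rescaled lattice points, by continuity and positive
  homogeneity. Each cone of \<open>\<Sigma>(\<M>)\<close> lies in a chamber, and inverting the linear piece of a
  mutation there transports \<open>l\<^sub>D\<close> to any other chart.
\<close>

section \<open>Subrings of the reals and their vectors\<close>

lemma real_subring_Ints: "real_subring \<int>"
  unfolding real_subring_def by auto

lemma real_subring_Ints_subset: "real_subring F \<Longrightarrow> \<int> \<subseteq> F"
  unfolding real_subring_def by blast

lemma real_subring_add: "real_subring F \<Longrightarrow> x \<in> F \<Longrightarrow> y \<in> F \<Longrightarrow> x + y \<in> F"
  unfolding real_subring_def by blast

lemma real_subring_mult: "real_subring F \<Longrightarrow> x \<in> F \<Longrightarrow> y \<in> F \<Longrightarrow> x * y \<in> F"
  unfolding real_subring_def by blast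

lemma real_subring_diff: "real_subring F \<Longrightarrow> x \<in> F \<Longrightarrow> y \<in> F \<Longrightarrow> x - y \<in> F"
  unfolding real_subring_def by (metis diff_conv_add_uminus)

lemma real_subring_0: "real_subring F \<Longrightarrow> 0 \<in> F"
  using real_subring_Ints_subset Ints_0 by blast

lemma real_subring_1: "real_subring F \<Longrightarrow> 1 \<in> F"
  using real_subring_Ints_subset Ints_1 by blast

lemma real_subring_sum: "real_subring F \<Longrightarrow> (\<And>i. i \<in> I \<Longrightarrow> g i \<in> F) \<Longrightarrow> sum g I \<in> F"
  by (induction I rule: infinite_finite_induct)
     (auto intro: real_subring_add simp: real_subring_0)

lemma Fvec_mono: "F \<subseteq> F' \<Longrightarrow> Fvec F \<subseteq> Fvec F'"
  unfolding Fvec_def by blast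

lemma Fvec_Ints_subset: "real_subring F \<Longrightarrow> Fvec \<int> \<subseteq> Fvec F"
  by (intro Fvec_mono real_subring_Ints_subset)

lemma zero_in_Fvec: "real_subring F \<Longrightarrow> 0 \<in> Fvec F"
  unfolding Fvec_def by (simp add: real_subring_0)

lemma axis_in_Fvec: "real_subring F \<Longrightarrow> axis i 1 \<in> Fvec F"
  unfolding Fvec_def axis_def by (simp add: real_subring_0 real_subring_1)

lemma Fvec_add: "real_subring F \<Longrightarrow> x \<in> Fvec F \<Longrightarrow> y \<in> Fvec F \<Longrightarrow> x + y \<in> Fvec F"
  unfolding Fvec_def by (simp add: real_subring_add)

lemma Fvec_scaleR: "real_subring F \<Longrightarrow> c \<in> F \<Longrightarrow> x \<in> Fvec F \<Longrightarrow> c *\<^sub>R x \<in> Fvec F"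
  unfolding Fvec_def by (simp add: real_subring_mult)

lemma Fvec_uminus: "real_subring F \<Longrightarrow> x \<in> Fvec F \<Longrightarrow> - x \<in> Fvec F"
  unfolding Fvec_def real_subring_def by auto

lemma Fvec_sum: "real_subring F \<Longrightarrow> (\<And>i. i \<in> I \<Longrightarrow> g i \<in> Fvec F) \<Longrightarrow> sum g I \<in> Fvec F"
  by (induction I rule: infinite_finite_induct) (auto intro: Fvec_add zero_in_Fvec)

lemma linear_eq_sum_axis:
  fixes l :: "real^'n \<Rightarrow> real"
  assumes "linear l"
  shows "l x = (\<Sum>i\<in>UNIV. x $ i * l (axis i 1))"
proof -
  have "l x = l (\<Sum>i\<in>UNIV. x $ i *\<^sub>R axis i 1)"
    using basis_expansion[of x] by (simp add: scalar_mult_eq_scaleR)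
  then show ?thesis
    using assms by (simp add: linear_sum linear_scale)
qed

lemma linear_imp_Klinear_functional:
  fixes l :: "real^'n \<Rightarrow> real"
  assumes l: "linear l" "\<forall>x\<in>Fvec F. l x \<in> F"
    and F: "real_subring F" "real_subring F'" "F \<subseteq> F'"
  shows "Klinear_functional F' l"
proof -
  have "l x \<in> F'" if "x \<in> Fvec F'" for x
  proof -
    have "l (axis i 1) \<in> F'" "x $ i \<in> F'" for i
      using l(2) axis_in_Fvec[OF F(1)] F(3) that unfolding Fvec_def by blast+
    then show ?thesis
      unfolding linear_eq_sum_axis[OF l(1), of x] by (auto intro: real_subring_sum real_subring_mult F(2))
  qed
  then show ?thesis
    unfolding Klinear_functional_def using l(1) by (simp add: linear_add linear_scale)
qed

lemma Klinear_functional_linear_extension: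
  fixes h :: "real^'n \<Rightarrow> real"
  assumes F: "real_subring F" and h: "Klinear_functional F h"
  obtains l where "linear l" "\<And>x. x \<in> Fvec F \<Longrightarrow> l x = h x"
proof
  define l where "l x = (\<Sum>i\<in>UNIV. x $ i * h (axis i 1))" for x :: "real^'n"
  show "linear l"
    unfolding l_def by (intro linearI) (simp_all add: sum.distrib sum_distrib_left algebra_simps)
  have add: "h (x + y) = h x + h y" and scale: "h (c *\<^sub>R x) = c * h x"
    if "x \<in> Fvec F" "y \<in> Fvec F" "c \<in> F" for x y c
    using h that unfolding Klinear_functional_def by blast+
  have h0: "h 0 = 0" using scale[of 0 0 0] zero_in_Fvec[OF F] real_subring_0[OF F] by simp
  have sum: "h (\<Sum>i\<in>I. x $ i *\<^sub>R axis i 1) = (\<Sum>i\<in>I. x $ i * h (axis i 1))" if "x \<in> Fvec F" for x I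
  proof (induction I rule: infinite_finite_induct)
    case (insert i I)
    have "x $ i \<in> F" using that unfolding Fvec_def by blast
    moreover have "(\<Sum>i\<in>I. x $ i *\<^sub>R axis i 1) \<in> Fvec F"
      using that by (intro Fvec_sum[OF F] Fvec_scaleR[OF F] axis_in_Fvec[OF F]) (auto simp: Fvec_def)
    ultimately show ?case
      using insert by (simp add: add Fvec_scaleR[OF F] axis_in_Fvec[OF F] scale)
  qed (use h0 in auto)
  show "l x = h x" if "x \<in> Fvec F" for x
    using sum[OF that, of UNIV] basis_expansion[of x] by (simp add: l_def scalar_mult_eq_scaleR)
qed

section \<open>Rational cones and lattice points\<close>

lemma convex_cone_nonneg_sum:
  assumes "convex_cone T" "finite V"
  shows "V \<subseteq> T \<Longrightarrow> \<forall>v\<in>V. t v \<ge> 0 \<Longrightarrow> (\<Sum>v\<in>V. t v *\<^sub>R v) \<in> T"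
  using assms(2)
proof (induction V rule: finite_induct)
  case empty then show ?case using assms(1) by (simp add: convex_cone_contains_0)
next
  case (insert v V) then show ?case using assms(1) by (simp add: convex_cone_add convex_cone_scaleR)
qed

lemma nonneg_combinations_eq_convex_cone_hull:
  assumes "finite V"
  shows "{x. \<exists>t. (\<forall>v\<in>V. t v \<ge> 0) \<and> x = (\<Sum>v\<in>V. t v *\<^sub>R v)} = convex_cone hull V"
    (is "?S = _")
proof (rule hull_unique[symmetric])
  show "V \<subseteq> ?S"
  proof
    fix v assume "v \<in> V"
    then have "v = (\<Sum>w\<in>V. (if w = v then 1 else 0) *\<^sub>R w)"
      using assms by (simp add: if_distrib[of "\<lambda>c. c *\<^sub>R _"] cong: if_cong)
    then show "v \<in> ?S" by (intro CollectI exI[of _ "\<lambda>w. if w = v then 1 else 0"]) auto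
  qed
  show "convex_cone ?S" unfolding convex_cone_iff
  proof (intro conjI ballI allI impI)
    show "0 \<in> ?S" by (intro CollectI exI[of _ "\<lambda>w. 0"]) auto
  next
    fix x y assume "x \<in> ?S" "y \<in> ?S"
    then obtain s t where "\<forall>v\<in>V. s v \<ge> 0" "x = (\<Sum>v\<in>V. s v *\<^sub>R v)" "\<forall>v\<in>V. t v \<ge> 0" "y = (\<Sum>v\<in>V. t v *\<^sub>R v)"
      by auto
    then show "x + y \<in> ?S"
      by (intro CollectI exI[of _ "\<lambda>v. s v + t v"]) (auto simp: scaleR_add_left sum.distrib)
  next
    fix x and c :: real assume "x \<in> ?S" "0 \<le> c"
    then obtain s where "\<forall>v\<in>V. s v \<ge> 0" "x = (\<Sum>v\<in>V. s v *\<^sub>R v)" by auto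
    then show "c *\<^sub>R x \<in> ?S"
      using \<open>0 \<le> c\<close> by (intro CollectI exI[of _ "\<lambda>v. c * s v"]) (auto simp: scaleR_sum_right)
  qed
  show "?S \<subseteq> T" if "V \<subseteq> T" "convex_cone T" for T
    using convex_cone_nonneg_sum[OF that(2) assms] that(1) by blast
qed

lemma Frational_cone_closed_convex_cone:
  assumes "Frational_cone F C"
  shows "closed C \<and> convex_cone C"
proof -
  obtain V where "finite V" "C = {x. \<exists>t. (\<forall>v\<in>V. t v \<ge> 0) \<and> x = (\<Sum>v\<in>V. t v *\<^sub>R v)}"
    using assms unfolding Frational_cone_def by blast
  then have "C = convex_cone hull V" by (simp add: nonneg_combinations_eq_convex_cone_hull)
  then show ?thesis
    using closed_convex_cone_hull[OF \<open>finite V\<close>] convex_cone_convex_cone_hull by simp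
qed

lemma complete_fan_finite: "complete_fan F S \<Longrightarrow> finite S"
  unfolding complete_fan_def Ffan_def by (elim conjE)

lemma complete_fan_covers:
  assumes "complete_fan F S"
  shows "\<exists>C\<in>S. x \<in> C"
proof -
  have "\<Union>S = UNIV" using assms unfolding complete_fan_def by (rule conjunct2)
  then show ?thesis by blast
qed

lemma complete_fan_face:
  assumes "complete_fan F S" "C \<in> S" "D \<in> S"
  shows "(C \<inter> D) face_of C"
proof -
  have "\<forall>C\<in>S. \<forall>D\<in>S. (C \<inter> D) face_of C \<and> (C \<inter> D) face_of D"
    using assms(1) unfolding complete_fan_def Ffan_def by (elim conjE)
  then show ?thesis using assms(2,3) by blast
qed

lemma complete_fan_cone:
  assumes "complete_fan F S" "C \<in> S"
  shows "closed C \<and> convex_cone C"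
proof -
  have "\<forall>C\<in>S. Frational_cone F C"
    using assms(1) unfolding complete_fan_def Ffan_def by (elim conjE)
  then show ?thesis using Frational_cone_closed_convex_cone assms(2) by blast
qed

lemma lattice_point_near:
  fixes y :: "real^'n"
  obtains z where "z \<in> Fvec \<int>" "dist z y \<le> real CARD('n)"
proof
  let ?z = "(\<chi> i. real_of_int \<lfloor>y $ i\<rfloor>) :: real^'n"
  show "?z \<in> Fvec \<int>" unfolding Fvec_def by auto
  have "dist ?z y \<le> (\<Sum>i\<in>UNIV. \<bar>(?z - y) $ i\<bar>)"
    unfolding dist_norm by (rule norm_le_l1_cart)
  also have "\<dots> \<le> (\<Sum>i\<in>(UNIV::'n set). 1)"
    by (rule sum_mono) (simp, linarith)
  finally show "dist ?z y \<le> real CARD('n)" by simp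
qed

text \<open>Scale up a ball in the interior until it swallows the ball of radius \<open>R\<close> around its
  nearest lattice point.\<close>
lemma deep_lattice_point:
  fixes D :: "(real^'n) set"
  assumes "conic D" "interior D \<noteq> {}"
  obtains z where "z \<in> Fvec \<int>" "cball z R \<subseteq> D"
proof -
  obtain w e where e: "e > 0" "ball w e \<subseteq> D"
    using assms(2) mem_interior by blast
  define t where "t = (\<bar>R\<bar> + real CARD('n) + 1) / e"
  have t: "t > 0" "t * e = \<bar>R\<bar> + real CARD('n) + 1"
    using e by (simp_all add: t_def add_pos_nonneg)
  have ball: "ball (t *\<^sub>R w) (t * e) \<subseteq> D"
  proof
    fix y assume y: "y \<in> ball (t *\<^sub>R w) (t * e)"
    have "dist (t *\<^sub>R w) y = t * dist w ((1/t) *\<^sub>R y)"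
    proof -
      have "t *\<^sub>R w - y = t *\<^sub>R (w - (1/t) *\<^sub>R y)" using t by (simp add: algebra_simps)
      then show ?thesis using t by (simp add: dist_norm)
    qed
    then have "t * dist w ((1/t) *\<^sub>R y) < t * e" using y by simp
    then have "dist w ((1/t) *\<^sub>R y) < e" using t(1) by simp
    then have "(1/t) *\<^sub>R y \<in> D" using e by auto
    then show "y \<in> D" using conic_mul[OF assms(1), of "(1/t) *\<^sub>R y" t] t by simp
  qed
  obtain z where z: "z \<in> Fvec \<int>" "dist z (t *\<^sub>R w) \<le> real CARD('n)"
    using lattice_point_near by blast
  have "cball z R \<subseteq> ball (t *\<^sub>R w) (t * e)"
  proof
    fix y assume "y \<in> cball z R"
    then have "dist (t *\<^sub>R w) y \<le> real CARD('n) + R"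
      using z(2) dist_triangle[of "t *\<^sub>R w" y z] by (simp add: dist_commute)
    then show "y \<in> ball (t *\<^sub>R w) (t * e)" using t(2) by simp
  qed
  then show ?thesis using that ball z(1) by blast
qed

lemma cball_offset: "norm y \<le> R \<Longrightarrow> z + y \<in> cball z R"
  by (simp add: dist_norm)

definition dyadic_vecs :: "(real^'n) set" where
  "dyadic_vecs = {x. \<exists>k::nat. (2^k) *\<^sub>R x \<in> Fvec \<int>}"

lemma closure_dyadic_vecs: "closure (dyadic_vecs :: (real^'n) set) = UNIV"
proof -
  have "x \<in> closure dyadic_vecs" for x :: "real^'n"
  proof (unfold closure_approachable, intro allI impI)
    fix e :: real assume e: "e > 0"
    define M where "M = real CARD('n) + 1"
    have M: "M > 0" unfolding M_def by simp
    obtain k :: nat where k: "(1/2)^k < e / M"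
      using real_arch_pow_inv[of "e / M" "1/2"] e M by auto
    obtain z where z: "z \<in> Fvec \<int>" "dist z ((2^k) *\<^sub>R x) \<le> real CARD('n)"
      using lattice_point_near by blast
    define y where "y = (1/2^k) *\<^sub>R z"
    have "y \<in> dyadic_vecs" unfolding dyadic_vecs_def y_def using z(1) by (auto intro!: exI[of _ k])
    have "y - x = (1/2^k) *\<^sub>R (z - (2^k) *\<^sub>R x)" unfolding y_def by (simp add: algebra_simps)
    then have "dist y x = (1/2)^k * dist z ((2^k) *\<^sub>R x)"
      by (simp add: dist_norm power_one_over)
    also have "\<dots> \<le> (1/2)^k * real CARD('n)"
      using z(2) by (intro mult_left_mono) simp_all
    also have "\<dots> < (1/2)^k * M" unfolding M_def by simp
    also have "\<dots> < (e / M) * M" using k M by (intro mult_strict_right_mono) simp_all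
    finally have "dist y x < e" using M by simp
    with \<open>y \<in> dyadic_vecs\<close> show "\<exists>y\<in>dyadic_vecs. dist y x < e" by blast
  qed
  then show ?thesis by auto
qed

lemma dyadic_vecs_common_scale:
  assumes "x \<in> dyadic_vecs" "x' \<in> dyadic_vecs"
  obtains k :: nat where "(2^k) *\<^sub>R x \<in> Fvec \<int>" "(2^k) *\<^sub>R x' \<in> Fvec \<int>"
proof -
  obtain k k' :: nat where k: "(2^k) *\<^sub>R x \<in> Fvec \<int>" "(2^k') *\<^sub>R x' \<in> Fvec \<int>"
    using assms unfolding dyadic_vecs_def by blast
  have "(2^k' * 2^k) *\<^sub>R x \<in> Fvec \<int>" "(2^k * 2^k') *\<^sub>R x' \<in> Fvec \<int>"
    using Fvec_scaleR[OF real_subring_Ints, of "2^k'", OF _ k(1)]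
      Fvec_scaleR[OF real_subring_Ints, of "2^k", OF _ k(2)] by simp_all
  then show ?thesis using that[of "k + k'"] by (simp add: power_add mult.commute)
qed

lemma continuous_eq_on_dyadic_vecs:
  fixes g h :: "real^'n \<Rightarrow> real"
  assumes "continuous_on UNIV g" "continuous_on UNIV h" "\<And>x. x \<in> dyadic_vecs \<Longrightarrow> g x = h x"
  shows "g = h"
proof -
  have "closed {x. g x = h x}"
    using assms(1,2) by (intro closed_Collect_eq) auto
  then have "closure dyadic_vecs \<subseteq> {x. g x = h x}"
    using assms(3) by (intro closure_minimal) auto
  then show ?thesis using closure_dyadic_vecs by auto
qed

lemma homogeneous_eq_if_eq_on_lattice:
  fixes g h :: "real^'n \<Rightarrow> real"
  assumes "continuous_on UNIV g" "continuous_on UNIV h"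
    and "\<And>c x. c \<ge> 0 \<Longrightarrow> g (c *\<^sub>R x) = c * g x" "\<And>c x. c \<ge> 0 \<Longrightarrow> h (c *\<^sub>R x) = c * h x"
    and "\<And>z. z \<in> Fvec \<int> \<Longrightarrow> g z = h z"
  shows "g = h"
proof (rule continuous_eq_on_dyadic_vecs[OF assms(1,2)])
  fix x :: "real^'n" assume "x \<in> dyadic_vecs"
  then obtain k :: nat where "(2^k) *\<^sub>R x \<in> Fvec \<int>" unfolding dyadic_vecs_def by blast
  then show "g x = h x" using assms(3,4)[of "2^k" x] assms(5) by simp
qed

lemma linear_eq_if_eq_on_cone_lattice:
  fixes A B :: "real^'n \<Rightarrow> 'b::real_vector"
  assumes "linear A" "linear B" "conic S" "interior S \<noteq> {}"
    and eq: "\<And>z. z \<in> S \<Longrightarrow> z \<in> Fvec \<int> \<Longrightarrow> A z = B z"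
  shows "A = B"
proof (rule linear_eq_stdbasis[OF assms(1,2)])
  obtain z where z: "z \<in> Fvec \<int>" "cball z 1 \<subseteq> S"
    using deep_lattice_point[OF assms(3,4)] by blast
  fix v :: "real^'n" assume v: "v \<in> Basis"
  have "z + v \<in> cball z 1" using norm_Basis[OF v] by (intro cball_offset) simp
  moreover have "z \<in> cball z 1" by simp
  moreover obtain i where "v = axis i 1" using axis_inverse[OF v] by blast
  then have "z + v \<in> Fvec \<int>" using Fvec_add[OF real_subring_Ints z(1) axis_in_Fvec[OF real_subring_Ints]] by simp
  ultimately have "A z = B z" "A (z + v) = B (z + v)" using eq z by blast+
  then show "A v = B v" using assms(1,2) by (simp add: linear_add)
qed

lemma linear_nonneg_on_cone:
  fixes l :: "real^'n \<Rightarrow> real"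
  assumes l: "linear l" and D: "closed D" "convex_cone D" "interior D \<noteq> {}"
    and nonneg: "\<And>z. z \<in> D \<Longrightarrow> z \<in> Fvec \<int> \<Longrightarrow> 0 \<le> l z" and x: "x \<in> D"
  shows "0 \<le> l x"
proof (rule continuous_ge_on_closure[where S = "interior D \<inter> dyadic_vecs"])
  show "continuous_on (closure (interior D \<inter> dyadic_vecs)) l"
    using l by (simp add: linear_continuous_on linear_conv_bounded_linear)
  have "closure (interior D \<inter> dyadic_vecs) = closure (interior D)"
    by (rule closure_open_Int_superset) (simp_all add: closure_dyadic_vecs)
  also have "\<dots> = D"
    using D by (simp add: convex_closure_interior convex_cone_def)
  finally show "x \<in> closure (interior D \<inter> dyadic_vecs)" using x by simp
  fix w assume w: "w \<in> interior D \<inter> dyadic_vecs"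
  then obtain k :: nat where k: "(2^k) *\<^sub>R w \<in> Fvec \<int>" unfolding dyadic_vecs_def by blast
  have "w \<in> D" using w interior_subset by blast
  then have "(2^k) *\<^sub>R w \<in> D" using convex_cone_scaleR[OF D(2), of "2^k" w] by simp
  then have "0 \<le> l ((2^k) *\<^sub>R w)" using nonneg k by blast
  then have "0 \<le> 2^k * l w" by (simp add: linear_scale[OF l])
  then show "0 \<le> l w" by (metis not_le zero_le_mult_iff zero_less_numeral zero_less_power)
qed

lemma cone_base_point:
  fixes D :: "(real^'n) set"
  assumes F: "real_subring F" and D: "conic D" "interior D \<noteq> {}" and y: "y \<in> Fvec F"
  obtains w where "w \<in> D \<inter> Fvec F" "w + y \<in> D \<inter> Fvec F"
proof -
  obtain w where w: "w \<in> Fvec \<int>" "cball w (norm y) \<subseteq> D" by (rule deep_lattice_point[OF D])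
  have wF: "w \<in> Fvec F" using w(1) Fvec_Ints_subset[OF F] by blast
  then have "w \<in> D \<inter> Fvec F" "w + y \<in> D \<inter> Fvec F"
    using w(2) cball_offset[of y "norm y" w] Fvec_add[OF F wF y] by auto
  then show ?thesis by (rule that)
qed

lemma additive_on_imp_difference_function:
  fixes g :: "'a::ab_semigroup_add \<Rightarrow> 'b::ab_group_add"
  assumes add: "\<And>x y. x \<in> S \<Longrightarrow> y \<in> S \<Longrightarrow> g (x + y) = g x + g y"
  obtains h where "\<And>w y. w \<in> S \<Longrightarrow> w + y \<in> S \<Longrightarrow> h y = g (w + y) - g w"
proof
  define h where "h y = g ((SOME w. w \<in> S \<and> w + y \<in> S) + y) - g (SOME w. w \<in> S \<and> w + y \<in> S)" for y
  fix w y assume w: "w \<in> S" "w + y \<in> S"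
  define w' where "w' = (SOME w. w \<in> S \<and> w + y \<in> S)"
  have "w' \<in> S \<and> w' + y \<in> S" unfolding w'_def
    by (rule someI[where P = "\<lambda>w. w \<in> S \<and> w + y \<in> S" and x = w]) (use w in blast)
  then have "g ((w + y) + w') = g (w + y) + g w'" "g ((w' + y) + w) = g (w' + y) + g w"
    using add w by blast+
  moreover have "(w + y) + w' = (w' + y) + w" by (simp add: ac_simps)
  ultimately have "g (w + y) + g w' = g (w' + y) + g w" by simp
  then show "h y = g (w + y) - g w" unfolding h_def w'_def[symmetric] by (simp add: algebra_simps)
qed

lemma Klinear_functional_if_additive:
  fixes h :: "real^'n \<Rightarrow> real"
  assumes F: "real_subring F"
    and add: "\<And>x y. x \<in> Fvec F \<Longrightarrow> y \<in> Fvec F \<Longrightarrow> h (x + y) = h x + h y"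
    and scale: "\<And>c x. c \<in> F \<Longrightarrow> c \<ge> 0 \<Longrightarrow> x \<in> Fvec F \<Longrightarrow> h (c *\<^sub>R x) = c * h x"
    and vals: "\<And>x. x \<in> Fvec F \<Longrightarrow> h x \<in> F"
  shows "Klinear_functional F h"
proof -
  have "h 0 = 0" using add[OF zero_in_Fvec[OF F] zero_in_Fvec[OF F]] by simp
  then have uminus: "h (- x) = - h x" if "x \<in> Fvec F" for x
    using add[OF that Fvec_uminus[OF F that]] by simp
  have "h (c *\<^sub>R x) = c * h x" if c: "c \<in> F" and x: "x \<in> Fvec F" for c x
  proof (cases "c \<ge> 0")
    case False
    have "- c \<in> F" using c F unfolding real_subring_def by blast
    then have "h ((- c) *\<^sub>R (- x)) = (- c) * h (- x)"
      using scale[of "- c" "- x"] Fvec_uminus[OF F x] False by simp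
    then show ?thesis using uminus[OF x] by simp
  qed (use scale c x in blast)
  then show ?thesis unfolding Klinear_functional_def using add vals by blast
qed

text \<open>The form extending \<open>g\<close> is read off from differences \<open>g (w + y) - g w\<close> with \<open>w\<close> and \<open>w + y\<close>
  in \<open>D\<close>.\<close>
lemma additive_on_cone_imp_Klinear_functional:
  fixes g :: "real^'n \<Rightarrow> real"
  assumes F: "real_subring F" and D: "convex_cone D" "interior D \<noteq> {}"
    and add: "\<And>x y. x \<in> D \<inter> Fvec F \<Longrightarrow> y \<in> D \<inter> Fvec F \<Longrightarrow> g (x + y) = g x + g y"
    and homog: "\<And>c x. c \<in> F \<Longrightarrow> c \<ge> 0 \<Longrightarrow> x \<in> D \<inter> Fvec F \<Longrightarrow> g (c *\<^sub>R x) = c * g x"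
    and vals: "\<And>x. x \<in> D \<inter> Fvec F \<Longrightarrow> g x \<in> F"
  obtains h where "Klinear_functional F h" "\<And>x. x \<in> D \<inter> Fvec F \<Longrightarrow> g x = h x"
proof -
  let ?D = "D \<inter> Fvec F"
  have conic: "conic D" using D(1) unfolding convex_cone_def by blast
  have closed_add: "w + w' \<in> ?D" if "w \<in> ?D" "w' \<in> ?D" for w w'
    using that D(1) Fvec_add[OF F] by (auto intro: convex_cone_add)
  obtain h where h: "\<And>w y. w \<in> ?D \<Longrightarrow> w + y \<in> ?D \<Longrightarrow> h y = g (w + y) - g w"
    using additive_on_imp_difference_function[of ?D g] add by blast
  have "Klinear_functional F h"
  proof (rule Klinear_functional_if_additive[OF F])
    fix y y' :: "real^'n" assume y: "y \<in> Fvec F" "y' \<in> Fvec F"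
    obtain w where w: "w \<in> ?D" "w + y \<in> ?D" by (rule cone_base_point[OF F conic D(2) y(1)])
    obtain w' where w': "w' \<in> ?D" "w' + y' \<in> ?D" by (rule cone_base_point[OF F conic D(2) y(2)])
    have "w + w' \<in> ?D" "(w + w') + y \<in> ?D" "(w + w') + (y + y') \<in> ?D"
      using closed_add[OF w(1) w'(1)] closed_add[OF w(2) w'(1)] closed_add[OF w(2) w'(2)]
      by (simp_all add: ac_simps)
    then show "h (y + y') = h y + h y'"
      using h[of "w + w'"] h[of "w + w' + y" y'] by (simp add: ac_simps)
  next
    fix c and y :: "real^'n" assume c: "c \<in> F" "c \<ge> 0" and y: "y \<in> Fvec F"
    obtain w where w: "w \<in> ?D" "w + y \<in> ?D" by (rule cone_base_point[OF F conic D(2) y])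
    then have "c *\<^sub>R w \<in> ?D" "c *\<^sub>R w + c *\<^sub>R y \<in> ?D"
      using c convex_cone_scaleR[OF D(1)] Fvec_scaleR[OF F] by (auto simp flip: scaleR_add_right)
    then show "h (c *\<^sub>R y) = c * h y"
      using h homog[OF c w(1)] homog[OF c w(2)] h[OF w] by (simp add: right_diff_distrib flip: scaleR_add_right)
  next
    fix y :: "real^'n" assume y: "y \<in> Fvec F"
    obtain w where w: "w \<in> ?D" "w + y \<in> ?D" by (rule cone_base_point[OF F conic D(2) y])
    then show "h y \<in> F" using h[OF w] vals real_subring_diff[OF F] by simp
  qed
  moreover have zero: "0 \<in> ?D" using D(1) zero_in_Fvec[OF F] by (simp add: convex_cone_contains_0)
  then have "g x = h x" if "x \<in> ?D" for x using h[OF zero] add[OF zero zero] that by simp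
  ultimately show ?thesis using that by blast
qed

lemma superadditive_le_linear_on_cone:
  fixes g l :: "real^'n \<Rightarrow> real"
  assumes F: "real_subring F" and D: "convex_cone D" "interior D \<noteq> {}"
    and super: "\<And>x y. x \<in> Fvec F \<Longrightarrow> y \<in> Fvec F \<Longrightarrow> g x + g y \<le> g (x + y)"
    and l: "linear l" "\<And>x. x \<in> D \<inter> Fvec F \<Longrightarrow> g x = l x"
    and y: "y \<in> Fvec F"
  shows "g y \<le> l y"
proof -
  have "conic D" using D(1) unfolding convex_cone_def by blast
  then obtain z where z: "z \<in> D \<inter> Fvec F" "z + y \<in> D \<inter> Fvec F"
    by (rule cone_base_point[OF F _ D(2) y])
  then have "g z + g y \<le> g (z + y)" using super y by blast
  moreover have "g z = l z" "g (z + y) = l (z + y)" using l(2) z by blast+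
  ultimately show ?thesis using linear_add[OF l(1), of z y] by simp
qed

lemma finite_closed_cover_meets_interior:
  fixes U :: "'a::topological_space set"
  assumes "finite \<K>" "\<And>K. K \<in> \<K> \<Longrightarrow> closed K" "open U" "U \<noteq> {}" "U \<subseteq> \<Union>\<K>"
  shows "\<exists>K\<in>\<K>. U \<inter> interior K \<noteq> {}"
  using assms
proof (induction \<K> arbitrary: U rule: finite_induct)
  case (insert K \<K>)
  show ?case
  proof (cases "U \<inter> interior K = {}")
    case False
    then show ?thesis by blast
  next
    case True
    have "\<not> U \<subseteq> K"
    proof
      assume "U \<subseteq> K"
      then have "U \<subseteq> interior K" using insert.prems(2) by (rule interior_maximal)
      then show False using True insert.prems(3) by blast
    qed
    moreover have "open (U - K)" using insert.prems(1,2) by (simp add: open_Diff)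
    moreover have "U - K \<subseteq> \<Union>\<K>" using insert.prems(4) by blast
    ultimately obtain K' where "K' \<in> \<K>" "(U - K) \<inter> interior K' \<noteq> {}"
      using insert.IH[of "U - K"] insert.prems(1) by blast
    then show ?thesis by blast
  qed
qed simp

lemma continuous_on_Min_image:
  fixes g :: "'c \<Rightarrow> 'a::topological_space \<Rightarrow> 'b::linorder_topology"
  assumes "finite A" "A \<noteq> {}" "\<And>a. a \<in> A \<Longrightarrow> continuous_on S (g a)"
  shows "continuous_on S (\<lambda>x. Min ((\<lambda>a. g a x) ` A))"
  using assms
proof (induction A rule: finite_ne_induct)
  case (insert a A)
  then have "continuous_on S (\<lambda>x. min (g a x) (Min ((\<lambda>a. g a x) ` A)))"
    by (intro continuous_on_min) auto
  then show ?case using insert by simp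
qed simp

lemma Min_range_mult_left:
  fixes g :: "'i::finite \<Rightarrow> real"
  assumes "c \<ge> 0"
  shows "Min (range (\<lambda>b. c * g b)) = c * Min (range g)"
proof -
  have "mono (\<lambda>y::real. c * y)" using assms by (simp add: mono_def mult_left_mono)
  then show ?thesis by (subst mono_Min_commute) (simp_all add: image_image)
qed

text \<open>Near \<open>x\<close> only cones containing \<open>x\<close> matter, and finitely many closed sets covering a ball
  cannot all have empty interior.\<close>
lemma common_refinement_chamber_at:
  fixes S :: "'i::finite \<Rightarrow> (real^'n) set set"
  assumes fans: "\<And>b. complete_fan F (S b)"
  shows "\<exists>d. (\<forall>b. d b \<in> S b \<and> x \<in> d b) \<and> interior (\<Inter>b. d b) \<noteq> {}"
proof -
  have closed: "closed e" if "e \<in> S b" for e b using complete_fan_cone[OF fans that] by blast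
  define N where "N = (\<Union>b. \<Union>{e\<in>S b. x \<notin> e})"
  have "closed N" unfolding N_def
    using complete_fan_finite[OF fans] closed by (intro closed_Union) auto
  moreover have "x \<notin> N" unfolding N_def by blast
  ultimately obtain r where r: "r > 0" "ball x r \<subseteq> - N"
    using open_contains_ball[of "- N"] by (metis ComplI open_Compl)
  define P where "P = {d. \<forall>b. d b \<in> S b \<and> x \<in> d b}"
  have "P \<subseteq> Pi\<^sub>E UNIV S" unfolding P_def by (auto simp: PiE_UNIV_domain)
  then have "finite P" using complete_fan_finite[OF fans] by (meson finite_PiE finite_subset finite)
  have "ball x r \<subseteq> \<Union>((\<lambda>d. \<Inter>b. d b) ` P)"
  proof
    fix y assume y: "y \<in> ball x r"
    have "\<exists>e. e \<in> S b \<and> y \<in> e \<and> x \<in> e" for b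
      using complete_fan_covers[OF fans, of b y] y r(2) unfolding N_def by blast
    then obtain d where "\<forall>b. d b \<in> S b \<and> y \<in> d b \<and> x \<in> d b" by metis
    then show "y \<in> \<Union>((\<lambda>d. \<Inter>b. d b) ` P)" unfolding P_def by blast
  qed
  moreover have "closed (\<Inter>b. d b)" if "d \<in> P" for d
    using that closed unfolding P_def by (blast intro: closed_INT)
  ultimately have "\<exists>K\<in>(\<lambda>d. \<Inter>b. d b) ` P. ball x r \<inter> interior K \<noteq> {}"
    using \<open>finite P\<close> r(1) by (intro finite_closed_cover_meets_interior) auto
  then show ?thesis unfolding P_def by blast
qed

text \<open>A face of \<open>c b\<close> containing a relative interior point of \<open>C \<subseteq> c b\<close> contains all of \<open>C\<close>.\<close>
lemma common_refinement_chamber: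
  fixes S :: "'i::finite \<Rightarrow> (real^'n) set set" and C :: "(real^'n) set"
  assumes fans: "\<And>b. complete_fan F (S b)" and C: "convex C" "C \<noteq> {}"
    and c: "\<And>b. c b \<in> S b" "\<And>b. C \<subseteq> c b"
  shows "\<exists>d. (\<forall>b. d b \<in> S b \<and> C \<subseteq> d b) \<and> interior (\<Inter>b. d b) \<noteq> {}"
proof -
  obtain x0 where x0: "x0 \<in> rel_interior C" using rel_interior_eq_empty C by blast
  obtain d where d: "\<forall>b. d b \<in> S b \<and> x0 \<in> d b" "interior (\<Inter>b. d b) \<noteq> {}"
    using common_refinement_chamber_at[where S = S and x = x0, OF fans] by blast
  have "C \<subseteq> d b" for b
  proof -
    have db: "d b \<in> S b" "x0 \<in> d b" using d(1) by blast+
    have "C \<subseteq> c b \<inter> d b"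
      by (rule subset_of_face_of[OF complete_fan_face[OF fans c(1) db(1)] c(2)])
         (use x0 rel_interior_subset c(2) db(2) in blast)
    then show ?thesis by blast
  qed
  with d show ?thesis by blast
qed

section \<open>The point read in the charts\<close>

lemma elems_pinv: "m \<in> elems K \<mu> \<Longrightarrow> pinv \<mu> a (m a) = m"
  unfolding elems_def pinv_def by auto

lemma elems_chart: "m \<in> elems K \<mu> \<Longrightarrow> m b = \<mu> a b (m a)"
  unfolding elems_def by auto

lemma elems_Fvec: "m \<in> elems K \<mu> \<Longrightarrow> m a \<in> Fvec K"
  unfolding elems_def by auto

lemma linear_on_PLcone_cong:
  assumes "\<And>m. m \<in> elems K \<mu> \<Longrightarrow> q m = q' m"
  shows "linear_on_PLcone K \<mu> q a0 C \<longleftrightarrow> linear_on_PLcone K \<mu> q' a0 C"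
  unfolding linear_on_PLcone_def by (simp add: assms)

locale polyptych_point =
  fixes F :: "real set" and \<mu> :: "'i::finite \<Rightarrow> 'i \<Rightarrow> real^'n \<Rightarrow> real^'n"
    and p :: "('i \<Rightarrow> real^'n) \<Rightarrow> real"
  assumes polyptych: "polyptych F \<mu>" and point: "p \<in> Sp F \<mu>"
begin

lemma polyptych_parts:
  "real_subring F" "pw_linear F (\<mu> a b)" "x \<in> Fvec F \<Longrightarrow> \<mu> a a x = x"
  "x \<in> Fvec F \<Longrightarrow> \<mu> b a (\<mu> a b x) = x" "x \<in> Fvec F \<Longrightarrow> \<mu> b c (\<mu> a b x) = \<mu> a c x"
  using polyptych unfolding polyptych_def by simp_all

lemmas real_subring = polyptych_parts(1)
  and mutation_self = polyptych_parts(3)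
  and mutation_inverse = polyptych_parts(4)
  and mutation_comp = polyptych_parts(5)

definition fan :: "'i \<Rightarrow> 'i \<Rightarrow> (real^'n) set set" where
  "fan a b = (SOME S. linearity_fan F (\<mu> a b) S)"

lemma fan: "complete_fan F (fan a b)" "\<And>C. C \<in> fan a b \<Longrightarrow> linear_on_cone F (\<mu> a b) C"
proof -
  have "\<exists>S. linearity_fan F (\<mu> a b) S"
    using polyptych_parts(2) unfolding pw_linear_def linearity_fan_def by blast
  then have "linearity_fan F (\<mu> a b) (fan a b)" unfolding fan_def by (rule someI_ex)
  then show "complete_fan F (fan a b)" "\<And>C. C \<in> fan a b \<Longrightarrow> linear_on_cone F (\<mu> a b) C"
    unfolding linearity_fan_def by blast+
qed

lemma continuous_on_mutation [continuous_intros]: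
  assumes "continuous_on S g"
  shows "continuous_on S (\<lambda>x. \<mu> a b (g x))"
proof -
  have "continuous_on UNIV (\<mu> a b)" using polyptych_parts(2) unfolding pw_linear_def by blast
  then show ?thesis by (rule continuous_on_compose2[OF _ assms]) simp
qed

lemma mutation_piece:
  obtains C A where "C \<in> fan a b" "x \<in> C" "convex_cone C"
    "linear A" "\<forall>y\<in>Fvec F. A y \<in> Fvec F" "\<forall>y\<in>C. \<mu> a b y = A y"
proof -
  obtain C where C: "C \<in> fan a b" "x \<in> C" using complete_fan_covers[OF fan(1)] by blast
  moreover obtain A where "linear A" "\<forall>y\<in>Fvec F. A y \<in> Fvec F" "\<forall>y\<in>C. \<mu> a b y = A y"
    using fan(2)[OF C(1)] unfolding linear_on_cone_def by blast
  ultimately show ?thesis using that complete_fan_cone[OF fan(1) C(1)] by blast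
qed

lemma mutation_Fvec: "x \<in> Fvec F \<Longrightarrow> \<mu> a b x \<in> Fvec F"
  by (rule mutation_piece[of a b x]) auto

lemma mutation_scaleR: "c \<ge> 0 \<Longrightarrow> \<mu> a b (c *\<^sub>R x) = c *\<^sub>R \<mu> a b x"
  by (rule mutation_piece[of a b x]) (auto simp: convex_cone_scaleR linear_scale)

lemma pinv_in_elems: "x \<in> Fvec F \<Longrightarrow> pinv \<mu> a x \<in> elems F \<mu>"
  unfolding elems_def pinv_def using mutation_Fvec mutation_comp by auto

lemma pinv_mutation: "x \<in> Fvec F \<Longrightarrow> pinv \<mu> b (\<mu> a b x) = pinv \<mu> a x"
  unfolding pinv_def using mutation_comp by auto

definition chart_val :: "'i \<Rightarrow> real^'n \<Rightarrow> real" where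
  "chart_val a x = p (pinv \<mu> a x)"

lemma chart_val_in_F: "x \<in> Fvec F \<Longrightarrow> chart_val a x \<in> F"
  using point pinv_in_elems unfolding chart_val_def Sp_def by blast

lemma chart_val_scaleR:
  assumes "x \<in> Fvec F" "c \<in> F" "c \<ge> 0"
  shows "chart_val a (c *\<^sub>R x) = c * chart_val a x"
proof -
  have "pscale \<mu> a c (pinv \<mu> a x) = pinv \<mu> a (c *\<^sub>R x)"
    unfolding pscale_def using assms(1) by (simp add: pinv_def mutation_self)
  moreover have "p (pscale \<mu> a c (pinv \<mu> a x)) = c * p (pinv \<mu> a x)"
    using point pinv_in_elems[OF assms(1)] assms(2,3) unfolding Sp_def by blast
  ultimately show ?thesis unfolding chart_val_def by simp
qed

lemma chart_val_add_Min:
  assumes "x \<in> Fvec F" "x' \<in> Fvec F"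
  shows "chart_val a x + chart_val a x' = Min (range (\<lambda>b. chart_val b (\<mu> a b x + \<mu> a b x')))"
proof -
  have "p (pinv \<mu> a x) + p (pinv \<mu> a x') = Min (range (\<lambda>b. p (padd \<mu> b (pinv \<mu> a x) (pinv \<mu> a x'))))"
    using point pinv_in_elems[OF assms(1)] pinv_in_elems[OF assms(2)] unfolding Sp_def by blast
  moreover have "padd \<mu> b (pinv \<mu> a x) (pinv \<mu> a x') = pinv \<mu> b (\<mu> a b x + \<mu> a b x')" for b
    unfolding padd_def pinv_def by simp
  ultimately show ?thesis unfolding chart_val_def by simp
qed

lemma chart_val_superadditive:
  assumes "x \<in> Fvec F" "x' \<in> Fvec F"
  shows "chart_val a x + chart_val a x' \<le> chart_val a (x + x')"
proof -
  have "chart_val a (x + x') \<in> range (\<lambda>b. chart_val b (\<mu> a b x + \<mu> a b x'))"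
    using assms by (auto simp: mutation_self intro: range_eqI[of _ _ a])
  then show ?thesis unfolding chart_val_add_Min[OF assms] by (simp add: Min_le)
qed

definition chamber :: "'i \<Rightarrow> (real^'n) set \<Rightarrow> bool" where
  "chamber a D \<longleftrightarrow> closed D \<and> convex_cone D \<and> interior D \<noteq> {} \<and>
     (\<forall>b. \<exists>A. linear A \<and> (\<forall>x\<in>D. \<mu> a b x = A x))"

lemma chamber_mutation_linear:
  assumes "chamber a D"
  obtains A where "linear A" "\<forall>x\<in>D. \<mu> a b x = A x"
  using assms unfolding chamber_def by blast

lemma chart_val_additive_on_chamber:
  assumes D: "chamber a D" and x: "x \<in> D \<inter> Fvec F" and x': "x' \<in> D \<inter> Fvec F"
  shows "chart_val a (x + x') = chart_val a x + chart_val a x'"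
proof -
  have "x + x' \<in> D" using D x x' unfolding chamber_def by (blast intro: convex_cone_add)
  moreover have "\<mu> a b x + \<mu> a b x' = \<mu> a b (x + x')" for b
  proof -
    obtain A where "linear A" "\<forall>y\<in>D. \<mu> a b y = A y" by (rule chamber_mutation_linear[OF D])
    then show ?thesis using x x' \<open>x + x' \<in> D\<close> by (simp add: linear_add)
  qed
  moreover have "x + x' \<in> Fvec F" using x x' Fvec_add[OF real_subring] by blast
  ultimately show ?thesis
    using chart_val_add_Min[of x x' a] x x' by (simp add: chart_val_def pinv_mutation)
qed

lemma chamber_linear_form:
  assumes "chamber a D"
  shows "\<exists>l. linear l \<and> (\<forall>x\<in>Fvec F. l x \<in> F) \<and> (\<forall>x\<in>D \<inter> Fvec F. chart_val a x = l x)"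
proof -
  have D: "convex_cone D" "interior D \<noteq> {}" using assms unfolding chamber_def by blast+
  obtain h where h: "Klinear_functional F h" "\<And>x. x \<in> D \<inter> Fvec F \<Longrightarrow> chart_val a x = h x"
  proof (rule additive_on_cone_imp_Klinear_functional[where g = "chart_val a", OF real_subring D])
    show "chart_val a (x + y) = chart_val a x + chart_val a y"
      if "x \<in> D \<inter> Fvec F" "y \<in> D \<inter> Fvec F" for x y
      using chart_val_additive_on_chamber[OF assms that] .
    show "chart_val a (c *\<^sub>R x) = c * chart_val a x" if "c \<in> F" "c \<ge> 0" "x \<in> D \<inter> Fvec F" for c x
      using chart_val_scaleR that by blast
    show "chart_val a x \<in> F" if "x \<in> D \<inter> Fvec F" for x
      using chart_val_in_F that by blast
  qed blast
  obtain l where "linear l" "\<And>x. x \<in> Fvec F \<Longrightarrow> l x = h x"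
    using Klinear_functional_linear_extension[OF real_subring h(1)] by blast
  with h show ?thesis unfolding Klinear_functional_def by auto
qed

lemma chamber_forms_le:
  assumes D: "chamber a D" "linear l" "\<forall>x\<in>D \<inter> Fvec F. chart_val a x = l x"
    and D': "chamber a D'" "linear l'" "\<forall>x\<in>D' \<inter> Fvec F. chart_val a x = l' x"
    and x: "x \<in> D"
  shows "l x \<le> l' x"
proof -
  have D'_cone: "convex_cone D'" "interior D' \<noteq> {}" using D'(1) unfolding chamber_def by blast+
  have "0 \<le> (\<lambda>y. l' y - l y) x"
  proof (rule linear_nonneg_on_cone[OF _ _ _ _ _ x])
    show "linear (\<lambda>y. l' y - l y)"
      using D(2) D'(2) by (simp add: linear_conv_bounded_linear bounded_linear_sub)
    fix z assume "z \<in> D" "z \<in> Fvec \<int>"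
    then have z: "z \<in> D \<inter> Fvec F" using Fvec_Ints_subset[OF real_subring] by blast
    have "chart_val a z \<le> l' z"
      using superadditive_le_linear_on_cone[where g = "chart_val a", OF real_subring D'_cone
          chart_val_superadditive D'(2)] D'(3) z by blast
    moreover have "chart_val a z = l z" using D(3) z by blast
    ultimately show "0 \<le> l' z - l z" by simp
  qed (use D(1) in \<open>auto simp: chamber_def\<close>)
  then show ?thesis by simp
qed

lemma chamber_of_fans:
  assumes fans: "\<And>b. linearity_fan F (\<mu> a b) (S b)" and d: "\<And>b. d b \<in> S b"
    and int: "interior (\<Inter>b. d b) \<noteq> {}"
  shows "chamber a (\<Inter>b. d b)"
  unfolding chamber_def
proof (intro conjI allI int)
  have cone: "closed (d b) \<and> convex_cone (d b)" for b
    using fans[of b] complete_fan_cone[OF _ d] unfolding linearity_fan_def by blast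
  then show "closed (\<Inter>b. d b)" by (intro closed_INT) blast
  show "convex_cone (\<Inter>b. d b)" using cone by (intro convex_cone_Inter) blast
  fix b
  obtain A where "linear A" "\<forall>x\<in>d b. \<mu> a b x = A x"
    using fans[of b] d[of b] unfolding linearity_fan_def linear_on_cone_def by blast
  then show "\<exists>A. linear A \<and> (\<forall>x\<in>\<Inter>b. d b. \<mu> a b x = A x)" by blast
qed

lemma Sigma_cone_in_chamber:
  assumes "C \<in> Sigma_chart F \<mu> a0"
  obtains D where "chamber a0 D" "C \<subseteq> D"
proof -
  obtain S where S: "\<forall>b. minimal_fan F (\<mu> a0 b) (S b)" "C \<in> common_refinement S"
    using assms unfolding Sigma_chart_def by blast
  obtain c where c: "C = (\<Inter>b. c b)" "\<And>b. c b \<in> S b"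
    using S(2) unfolding common_refinement_def by blast
  have lin: "linearity_fan F (\<mu> a0 b) (S b)" for b using S(1) unfolding minimal_fan_def by blast
  then have fans: "complete_fan F (S b)" for b unfolding linearity_fan_def by blast
  have "convex_cone C"
    unfolding c(1) using complete_fan_cone[OF fans c(2)] by (intro convex_cone_Inter) blast
  then have "convex C" "C \<noteq> {}" unfolding convex_cone_def by blast+
  moreover have "C \<subseteq> c b" for b using c(1) by blast
  ultimately obtain d where "\<forall>b. d b \<in> S b \<and> C \<subseteq> d b" "interior (\<Inter>b. d b) \<noteq> {}"
    using common_refinement_chamber[where S = S and C = C and c = c, OF fans] c(2) by blast
  then show ?thesis using that chamber_of_fans[OF lin] by blast
qed

text \<open>\<open>B\<close> is the linear piece of \<open>\<mu> a a0\<close> on a cone whose \<open>A\<close>-preimage meets \<open>D\<close> in a set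
  with interior; there \<open>B \<circ> A\<close> is the identity on lattice points.\<close>
lemma chamber_mutation_left_inverse:
  assumes D: "chamber a0 D" and A: "linear A" "\<forall>x\<in>D. \<mu> a0 a x = A x"
  obtains B where "linear B" "\<forall>x\<in>Fvec F. B x \<in> Fvec F" "\<And>x. B (A x) = x"
proof -
  have "\<exists>K\<in>(\<lambda>e. A -` e) ` fan a a0. interior D \<inter> interior K \<noteq> {}"
  proof (rule finite_closed_cover_meets_interior)
    show "finite ((\<lambda>e. A -` e) ` fan a a0)" using complete_fan_finite[OF fan(1)] by simp
    have "continuous_on UNIV A" using A(1) by (simp add: linear_continuous_on linear_conv_bounded_linear)
    then show "closed K" if "K \<in> (\<lambda>e. A -` e) ` fan a a0" for K
      using that complete_fan_cone[OF fan(1)] closed_vimage by blast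
    show "interior D \<noteq> {}" using D unfolding chamber_def by blast
    show "interior D \<subseteq> \<Union>((\<lambda>e. A -` e) ` fan a a0)" using complete_fan_covers[OF fan(1)] by blast
  qed simp
  then obtain e where e: "e \<in> fan a a0" "interior (D \<inter> A -` e) \<noteq> {}"
    by (auto simp: interior_Int)
  obtain B where B: "linear B" "\<forall>x\<in>Fvec F. B x \<in> Fvec F" "\<forall>y\<in>e. \<mu> a a0 y = B y"
    using fan(2)[OF e(1)] unfolding linear_on_cone_def by blast
  have cones: "convex_cone D" "convex_cone e"
    using D complete_fan_cone[OF fan(1) e(1)] unfolding chamber_def by blast+
  have "conic (D \<inter> A -` e)"
    unfolding conic_def using cones by (auto simp: convex_cone_scaleR linear_scale[OF A(1)])
  then have "B \<circ> A = id"
  proof (rule linear_eq_if_eq_on_cone_lattice[OF linear_compose[OF A(1) B(1)] linear_id _ e(2)])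
    fix z assume z: "z \<in> D \<inter> A -` e" "z \<in> Fvec \<int>"
    then have "z \<in> Fvec F" using Fvec_Ints_subset[OF real_subring] by blast
    then have "\<mu> a a0 (\<mu> a0 a z) = z" by (rule mutation_inverse)
    then show "(B \<circ> A) z = id z" using z(1) A(2) B(3) by auto
  qed
  then have "B (A x) = x" for x by (metis comp_apply id_apply)
  with B that show ?thesis by blast
qed

section \<open>The extension to real coordinates\<close>

definition chambers :: "'i \<Rightarrow> (real^'n) set set" where
  "chambers a = (\<lambda>d. \<Inter>b. d b) ` {d. (\<forall>b. d b \<in> fan a b) \<and> interior (\<Inter>b. d b) \<noteq> {}}"

definition chamber_form :: "'i \<Rightarrow> (real^'n) set \<Rightarrow> real^'n \<Rightarrow> real" where
  "chamber_form a D =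
     (SOME l. linear l \<and> (\<forall>x\<in>Fvec F. l x \<in> F) \<and> (\<forall>x\<in>D \<inter> Fvec F. chart_val a x = l x))"

text \<open>\<open>pext a\<close> is the extension of \<open>p \<circ> \<pi>\<^sub>a\<^sup>-\<^sup>1\<close> from \<open>F\<^sup>r\<close> to \<open>\<real>\<^sup>r\<close>.\<close>
definition pext :: "'i \<Rightarrow> real^'n \<Rightarrow> real" where
  "pext a x = Min ((\<lambda>D. chamber_form a D x) ` chambers a)"

lemma chambers_finite: "finite (chambers a)"
proof -
  have "{d. (\<forall>b. d b \<in> fan a b) \<and> interior (\<Inter>b. d b) \<noteq> {}} \<subseteq> Pi\<^sub>E UNIV (fan a)"
    by (auto simp: PiE_UNIV_domain)
  moreover have "finite (Pi\<^sub>E UNIV (fan a))"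
    using complete_fan_finite[OF fan(1)] by (intro finite_PiE) auto
  ultimately show ?thesis unfolding chambers_def by (meson finite_imageI finite_subset)
qed

lemma chambers_cover: obtains D where "D \<in> chambers a" "x \<in> D"
proof -
  obtain d where "\<forall>b. d b \<in> fan a b \<and> x \<in> d b" "interior (\<Inter>b. d b) \<noteq> {}"
    using common_refinement_chamber_at[where S = "fan a" and x = x, OF fan(1)] by blast
  then have "(\<Inter>b. d b) \<in> chambers a" "x \<in> (\<Inter>b. d b)" unfolding chambers_def by auto
  then show ?thesis using that by blast
qed

lemma chamber_form:
  assumes "D \<in> chambers a"
  shows "chamber a D" "linear (chamber_form a D)" "\<forall>x\<in>Fvec F. chamber_form a D x \<in> F"
    "\<forall>x\<in>D \<inter> Fvec F. chart_val a x = chamber_form a D x"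
proof -
  show D: "chamber a D"
    using assms chamber_of_fans[of a "fan a"] fan unfolding chambers_def linearity_fan_def by blast
  from someI_ex[OF chamber_linear_form[OF D]]
  show "linear (chamber_form a D)" "\<forall>x\<in>Fvec F. chamber_form a D x \<in> F"
    "\<forall>x\<in>D \<inter> Fvec F. chart_val a x = chamber_form a D x"
    unfolding chamber_form_def by blast+
qed

lemma pext_eq_on_chamber:
  assumes D: "chamber a D" "linear l" "\<forall>x\<in>D \<inter> Fvec F. chart_val a x = l x" and x: "x \<in> D"
  shows "pext a x = l x"
  unfolding pext_def
proof (rule Min_eqI)
  show "finite ((\<lambda>D. chamber_form a D x) ` chambers a)" using chambers_finite by simp
  show "l x \<le> y" if y: "y \<in> (\<lambda>D. chamber_form a D x) ` chambers a" for y
  proof -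
    obtain D' where "D' \<in> chambers a" "y = chamber_form a D' x" using y by blast
    then show ?thesis using chamber_forms_le[OF D chamber_form(1,2,4)[OF \<open>D' \<in> chambers a\<close>] x] by simp
  qed
  obtain D' where D': "D' \<in> chambers a" "x \<in> D'" by (rule chambers_cover)
  have "l x \<le> chamber_form a D' x"
    using chamber_forms_le[OF D chamber_form(1,2,4)[OF D'(1)] x] .
  moreover have "chamber_form a D' x \<le> l x"
    using chamber_forms_le[OF chamber_form(1,2,4)[OF D'(1)] D D'(2)] .
  ultimately show "l x \<in> (\<lambda>D. chamber_form a D x) ` chambers a" using D'(1) by force
qed

lemma pext_chamber_form:
  assumes "D \<in> chambers a" "x \<in> D"
  shows "pext a x = chamber_form a D x"
  using pext_eq_on_chamber chamber_form assms by blast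

lemma pext_eq_chart_val: "x \<in> Fvec F \<Longrightarrow> pext a x = chart_val a x"
  using chambers_cover pext_chamber_form chamber_form(4) by (metis IntI)

lemma continuous_on_pext [continuous_intros]:
  "continuous_on S g \<Longrightarrow> continuous_on S (\<lambda>x. pext a (g x))"
proof -
  have "chambers a \<noteq> {}" by (metis chambers_cover empty_iff)
  then have "continuous_on UNIV (pext a)"
    unfolding pext_def[abs_def] using chambers_finite chamber_form(2)
    by (intro continuous_on_Min_image) (auto simp: linear_continuous_on linear_conv_bounded_linear)
  then show "continuous_on S g \<Longrightarrow> continuous_on S (\<lambda>x. pext a (g x))"
    using continuous_on_compose2 by blast
qed

lemma pext_scaleR: "c \<ge> 0 \<Longrightarrow> pext a (c *\<^sub>R x) = c * pext a x"
proof -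
  assume c: "c \<ge> 0"
  obtain D where D: "D \<in> chambers a" "x \<in> D" by (rule chambers_cover)
  then have "c *\<^sub>R x \<in> D" using chamber_form(1) c unfolding chamber_def by (blast intro: convex_cone_scaleR)
  then show ?thesis using D pext_chamber_form chamber_form(2) by (simp add: linear_scale)
qed

lemma pext_in_subring:
  assumes "real_subring F'" "F \<subseteq> F'" "x \<in> Fvec F'"
  shows "pext a x \<in> F'"
proof -
  obtain D where D: "D \<in> chambers a" "x \<in> D" by (rule chambers_cover)
  have "Klinear_functional F' (chamber_form a D)"
    using chamber_form(2,3)[OF D(1)] by (rule linear_imp_Klinear_functional[OF _ _ real_subring assms(1,2)])
  then show ?thesis
    using pext_chamber_form[OF D] assms(3) unfolding Klinear_functional_def by simp
qed

lemma pext_mutation: "pext b (\<mu> a b x) = pext a x"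
proof -
  have "(\<lambda>x. pext b (\<mu> a b x)) = pext a"
  proof (rule homogeneous_eq_if_eq_on_lattice)
    show "continuous_on UNIV (\<lambda>x. pext b (\<mu> a b x))" "continuous_on UNIV (pext a)"
      by (intro continuous_intros)+
    fix z :: "real^'n" assume "z \<in> Fvec \<int>"
    then have z: "z \<in> Fvec F" using Fvec_Ints_subset[OF real_subring] by blast
    have "pext b (\<mu> a b z) = chart_val b (\<mu> a b z)" by (rule pext_eq_chart_val[OF mutation_Fvec[OF z]])
    also have "\<dots> = chart_val a z" unfolding chart_val_def by (simp add: pinv_mutation[OF z])
    finally show "pext b (\<mu> a b z) = pext a z" by (simp add: pext_eq_chart_val[OF z])
  qed (simp_all add: mutation_scaleR pext_scaleR)
  then show ?thesis by (rule fun_cong)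
qed

text \<open>The two sides are jointly, but not separately, homogeneous; hence the common dyadic
  scale of both arguments before passing to the limit in one argument at a time.\<close>
lemma pext_add_Min:
  "pext a x + pext a x' = Min (range (\<lambda>b. pext b (\<mu> a b x + \<mu> a b x')))"
proof -
  define G where "G x x' = pext a x + pext a x'" for x x'
  define H where "H x x' = Min (range (\<lambda>b. pext b (\<mu> a b x + \<mu> a b x')))" for x x'
  have lattice: "G z z' = H z z'" if "z \<in> Fvec \<int>" "z' \<in> Fvec \<int>" for z z'
  proof -
    have z: "z \<in> Fvec F" "z' \<in> Fvec F" using that Fvec_Ints_subset[OF real_subring] by blast+
    then have "pext b (\<mu> a b z + \<mu> a b z') = chart_val b (\<mu> a b z + \<mu> a b z')" for b
      using pext_eq_chart_val Fvec_add[OF real_subring] mutation_Fvec by blast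
    then show ?thesis
      unfolding G_def H_def using chart_val_add_Min[OF z] pext_eq_chart_val z by simp
  qed
  have G_scaleR: "G (c *\<^sub>R x) (c *\<^sub>R x') = c * G x x'" if "c \<ge> 0" for c x x'
    unfolding G_def using pext_scaleR[OF that] by (simp add: distrib_left)
  have H_scaleR: "H (c *\<^sub>R x) (c *\<^sub>R x') = c * H x x'" if "c \<ge> 0" for c x x'
    unfolding H_def using Min_range_mult_left[OF that]
    by (simp add: mutation_scaleR[OF that] pext_scaleR[OF that] flip: scaleR_add_right)
  have dyadic: "G x x' = H x x'" if xs: "x \<in> dyadic_vecs" "x' \<in> dyadic_vecs" for x x'
  proof -
    obtain k :: nat where "(2^k) *\<^sub>R x \<in> Fvec \<int>" "(2^k) *\<^sub>R x' \<in> Fvec \<int>"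
      by (rule dyadic_vecs_common_scale[OF xs])
    then show ?thesis using lattice G_scaleR[of "2^k" x x'] H_scaleR[of "2^k" x x'] by simp
  qed
  have continuous_H: "continuous_on UNIV (\<lambda>y. H (g y) (g' y))"
    if "continuous_on UNIV g" "continuous_on UNIV g'" for g g' :: "real^'n \<Rightarrow> real^'n"
    unfolding H_def using that by (intro continuous_on_Min_image continuous_intros) auto
  have continuous_G: "continuous_on UNIV (\<lambda>y. G (g y) (g' y))"
    if "continuous_on UNIV g" "continuous_on UNIV g'" for g g' :: "real^'n \<Rightarrow> real^'n"
    unfolding G_def using that by (intro continuous_intros)
  have "(\<lambda>x. G x x') = (\<lambda>x. H x x')" if x': "x' \<in> dyadic_vecs" for x'
    using dyadic x' by (intro continuous_eq_on_dyadic_vecs continuous_G continuous_H continuous_on_id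
        continuous_on_const) auto
  then have "G x x' = H x x'" if "x' \<in> dyadic_vecs" for x'
    using that by metis
  then have "(\<lambda>x'. G x x') = (\<lambda>x'. H x x')"
    by (intro continuous_eq_on_dyadic_vecs continuous_G continuous_H continuous_on_id continuous_on_const)
  then show ?thesis unfolding G_def H_def by metis
qed

lemma pext_elems: "m \<in> elems K \<mu> \<Longrightarrow> pext c (m c) = pext a (m a)"
  using elems_chart[of m K \<mu> a c] pext_mutation by simp

lemma pext_elems_eq_point: "m \<in> elems F \<mu> \<Longrightarrow> pext a (m a) = p m"
  using pext_eq_chart_val[OF elems_Fvec] elems_pinv unfolding chart_val_def by metis

lemma linear_on_PLcone_pext:
  assumes K: "real_subring K" "F \<subseteq> K" and C: "C \<in> Sigma_chart F \<mu> a0"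
  shows "linear_on_PLcone K \<mu> (\<lambda>m. pext c (m c)) a0 C"
  unfolding linear_on_PLcone_def
proof
  fix a
  obtain D where D: "chamber a0 D" "C \<subseteq> D" by (rule Sigma_cone_in_chamber[OF C])
  obtain l where l: "linear l" "\<forall>x\<in>Fvec F. l x \<in> F" "\<forall>x\<in>D \<inter> Fvec F. chart_val a0 x = l x"
    using chamber_linear_form[OF D(1)] by blast
  obtain A where A: "linear A" "\<forall>x\<in>D. \<mu> a0 a x = A x" by (rule chamber_mutation_linear[OF D(1)])
  obtain B where B: "linear B" "\<forall>x\<in>Fvec F. B x \<in> Fvec F" "\<And>x. B (A x) = x"
    using chamber_mutation_left_inverse[OF D(1) A] by blast
  have "Klinear_functional K (l \<circ> B)"
    using B(2) l(2) by (intro linear_imp_Klinear_functional[OF linear_compose[OF B(1) l(1)] _ real_subring K]) auto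
  moreover have "pext c (m c) = (l \<circ> B) (m a)" if m: "m \<in> elems K \<mu>" "m a0 \<in> C" for m
  proof -
    have "m a = A (m a0)" using elems_chart[OF m(1), of a a0] A(2) m(2) D(2) by auto
    then show ?thesis
      using pext_elems[OF m(1), of c a0] pext_eq_on_chamber[OF D(1) l(1,3)] m(2) D(2) B(3) by auto
  qed
  ultimately show "\<exists>l. Klinear_functional K l \<and>
      (\<forall>m\<in>elems K \<mu>. m a0 \<in> C \<longrightarrow> pext c (m c) = l (m a))"
    by blast
qed

lemma pext_point:
  assumes "real_subring F'" "F \<subseteq> F'"
  shows "(\<lambda>m. pext c (m c)) \<in> Sp F' \<mu>"
  unfolding Sp_def
proof (intro CollectI conjI ballI allI impI)
  fix m assume "m \<in> elems F' \<mu>"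
  then show "pext c (m c) \<in> F'" using pext_in_subring[OF assms] elems_Fvec by blast
next
  fix m m' assume m: "m \<in> elems F' \<mu>" "m' \<in> elems F' \<mu>"
  have "pext c (padd \<mu> b m m' c) = pext b (\<mu> c b (m c) + \<mu> c b (m' c))" for b
  proof -
    have "padd \<mu> b m m' c = \<mu> b c (m b + m' b)" unfolding padd_def pinv_def ..
    then show ?thesis using elems_chart[OF m(1), of b c] elems_chart[OF m(2), of b c]
      by (simp add: pext_mutation)
  qed
  then show "pext c (m c) + pext c (m' c) = Min (range (\<lambda>b. pext c (padd \<mu> b m m' c)))"
    by (simp add: pext_add_Min)
next
  fix l a m assume "l \<in> F'" "0 \<le> l" "m \<in> elems F' \<mu>"
  then show "pext c (pscale \<mu> a l m c) = l * pext c (m c)"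
    using elems_chart[of m F' \<mu> c a] unfolding pscale_def pinv_def
    by (simp add: mutation_scaleR pext_scaleR)
qed

end

theorem mainTheorem1:
  fixes F :: "real set"
    and \<mu> :: "'i::finite \<Rightarrow> 'i \<Rightarrow> real^'n \<Rightarrow> real^'n"
    and p :: "('i \<Rightarrow> real^'n) \<Rightarrow> real"
  assumes "polyptych F \<mu>"
    and "p \<in> Sp F \<mu>"
  shows "(\<forall>a0. \<forall>C\<in>Sigma_chart F \<mu> a0. linear_on_PLcone F \<mu> p a0 C) \<and>
         (\<forall>F'. real_subring F' \<and> F \<subseteq> F' \<longrightarrow>
            (\<exists>q. (\<forall>m\<in>elems F \<mu>. q m = p m) \<and>
                 (\<forall>a. continuous_on (Fvec F') (\<lambda>x. q (pinv \<mu> a x))) \<and>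
                 (\<forall>a0. \<forall>C\<in>Sigma_chart F \<mu> a0. linear_on_PLcone F' \<mu> q a0 C) \<and>
                 q \<in> Sp F' \<mu>))"
proof -
  interpret polyptych_point F \<mu> p using assms by unfold_locales
  fix c :: 'i
  let ?q = "\<lambda>m. pext c (m c)"
  have extends: "\<forall>m\<in>elems F \<mu>. ?q m = p m"
    using pext_elems pext_elems_eq_point by metis
  have "linear_on_PLcone F \<mu> p a0 C" if "C \<in> Sigma_chart F \<mu> a0" for a0 C
    using linear_on_PLcone_pext[OF real_subring order.refl that, of c]
      linear_on_PLcone_cong[of F \<mu> ?q p] extends by blast
  moreover have "\<exists>q. (\<forall>m\<in>elems F \<mu>. q m = p m) \<and>
      (\<forall>a. continuous_on (Fvec F') (\<lambda>x. q (pinv \<mu> a x))) \<and>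
      (\<forall>a0. \<forall>C\<in>Sigma_chart F \<mu> a0. linear_on_PLcone F' \<mu> q a0 C) \<and> q \<in> Sp F' \<mu>"
    if "real_subring F'" "F \<subseteq> F'" for F'
  proof (intro exI[of _ ?q] conjI allI ballI)
    show "?q m = p m" if "m \<in> elems F \<mu>" for m using extends that by blast
    show "continuous_on (Fvec F') (\<lambda>x. pext c (pinv \<mu> a x c))" for a
      unfolding pinv_def by (intro continuous_intros)
    show "linear_on_PLcone F' \<mu> ?q a0 C" if "C \<in> Sigma_chart F \<mu> a0" for a0 C
      using linear_on_PLcone_pext[OF \<open>real_subring F'\<close> \<open>F \<subseteq> F'\<close> that] .
    show "?q \<in> Sp F' \<mu>" using pext_point[OF that] .
  qed
  ultimately show ?thesis by blast
qed

end
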